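(* Let $\mathbf{f}^{(1)},\mathbf{f}^{(2)}:\mathbb{R}^d\to\mathbb{R}^d$ be Lipschitz with constants $L_1,L_2>0$, with $\sup_{\mathbf{x}\in\mathbb{R}^d}\|\mathbf{f}^{(1)}(\mathbf{x})-\mathbf{f}^{(2)}(\mathbf{x})\|\le\mu$. Let $J\ge2$, $T_2>0$, $\Delta=T_2/(J-1)$, $t_j=(j-1)\Delta$, and let $0<T_1\le\breve t<T_2$ with $\breve t=t_m$ a grid point and $|\breve t-T_1|\le\eta$ ($\mu,\eta>0$). Let $\mathbf{x}(t)$ solve the switched system with initial state $\mathbf{x}_0$. Let $\widehat{\mathbf{y}}(t_1)=\mathbf{x}_0$, $\widehat{\mathbf{y}}(t_j)=\mathcal{N}_j(\widehat{\mathbf{y}}(t_{j-1}))$ for $j=2,\dots,J$, where the maps $\mathcal{N}_j:\mathbb{R}^d\to\mathbb{R}^d$ satisfy, for some $\varepsilon\ge0$ and all $j=2,\dots,J$, $\|\mathcal{N}_j(\widehat{\mathbf{y}}(t_{j-1}))-\Phi^{(k_j)}_\Delta(\widehat{\mathbf{y}}(t_{j-1}))\|\le\varepsilon$ with $k_j=1$ if $t_j\le\breve t$ and $k_j=2$ if $t_j>\breve t$. Then for $j=2,\dots,J$, $$\|\widehat{\mathbf{y}}(t_j)-\mathbf{x}(t_j)\|\le\begin{cases}\dfrac{1-\exp(L_1t_j)}{1-\exp(L_1\Delta)}\varepsilon, & t_j\in(0,T_1],\\[2mm] \mu(t_j-T_1)\exp\big(\max(L_1,L_2)(t_j-T_1)\big)+\dfrac{1-\exp(L_1t_j)}{1-\exp(L_1\Delta)}\varepsilon,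 & t_j\in(T_1,\breve t],\\[2mm] \mu\eta\exp\big(L_2(t_j-\breve t)+\max(L_1,L_2)\eta\big)+\dfrac{1-\exp(L_2(t_j-\breve t))}{1-\exp(L_2\Delta)}\varepsilon+\exp\big(L_2(t_j-\breve t)\big)\dfrac{1-\exp(L_1\breve t)}{1-\exp(L_1\Delta)}\varepsilon, & t_j\in(\breve t,T_2].\end{cases}$$
   Context: $\|\cdot\|$ is the Euclidean norm. The switched system is $\frac{d}{dt}\mathbf{x}(t)=\mathbf{f}^{(\sigma(t))}(\mathbf{x}(t))$, $\mathbf{x}(0)=\mathbf{x}_0$, with $\sigma(t)=1$ for $t\in(0,T_1]$ and $\sigma(t)=2$ for $t\in(T_1,T_2]$; $T_1$ is the (unknown) switching time and $\breve t$ is its approximation identified by the paper's adaptive algorithm. For $k=1,2$, $\Phi^{(k)}_\Delta(\mathbf{z})$ denotes the state at time $\Delta$ of the solution of $\frac{d}{dt}\mathbf{z}=\mathbf{f}^{(k)}(\mathbf{z})$ started at $\mathbf{z}$ (the $\Delta$-lag flow map). The maps $\mathcal{N}_j$ are the trained local neural networks used to predict one time step; the accuracy hypothesis encodes that networks used for steps up to $\breve t$ approximate $\Phi^{(1)}_\Delta$ and those after approximate $\Phi^{(2)}_\Delta$ within $\varepsilon$ at the predicted states. *)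

theory Defs
  imports "HOL-Analysis.Analysis"
begin

text \<open>The Delta-lag flow map of the autonomous ODE z' = f z: the state at time Delta
  of the solution started at z (unique for globally Lipschitz f).\<close>
definition flow_map :: "('a::euclidean_space \<Rightarrow> 'a) \<Rightarrow> real \<Rightarrow> 'a \<Rightarrow> 'a" where
  "flow_map f \<Delta> z = (THE w. \<exists>u. u 0 = z \<and> u \<Delta> = w \<and>
      (\<forall>t\<in>{0..\<Delta>}. (u has_vector_derivative f (u t)) (at t within {0..\<Delta>})))"

definition switched_solution ::
  "('a::euclidean_space \<Rightarrow> 'a) \<Rightarrow> ('a \<Rightarrow> 'a) \<Rightarrow> real \<Rightarrow> real \<Rightarrow> 'a \<Rightarrow> (real \<Rightarrow> 'a) \<Rightarrow> bool" where
  "switched_solution f1 f2 T1 T2 x0 x \<longleftrightarrow>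
     x 0 = x0 \<and> continuous_on {0..T2} x \<and>
     (\<forall>t\<in>{0..T1}. (x has_vector_derivative f1 (x t)) (at t within {0..T1})) \<and>
     (\<forall>t\<in>{T1..T2}. (x has_vector_derivative f2 (x t)) (at t within {T1..T2}))"

end

theory Submission
  imports Defs
begin

text \<open>While the network imitates mode 1, compare it with the solution \<open>z\<close> of the unswitched
  mode-1 system from \<open>x\<^sub>0\<close>: \<open>z = x\<close> up to \<open>T\<^sub>1\<close>, and by Gronwall
  \<open>\<parallel>z t - x t\<parallel> \<le> \<mu> (t - T\<^sub>1) exp (L\<^sub>1 (t - T\<^sub>1))\<close> afterwards, since the two vector fields
  differ by at most \<open>\<mu>\<close>. Relative to an exact trajectory, each network step adds an error \<open>\<epsilon>\<close>,
  and one step of the exact flow magnifies earlier errors by at most \<open>exp (L \<Delta>)\<close>; the resulting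
  linear recurrence sums to a geometric series. After the detected switch \<open>t\<^sub>b\<close> the network
  imitates mode 2 and is compared with \<open>x\<close> itself, starting from the error at \<open>t\<^sub>b\<close>,
  where \<open>t\<^sub>b - T\<^sub>1 \<le> \<eta>\<close>.

  Since \<open>flow_map\<close> is a definite description, existence (by Picard iteration) and uniqueness
  (by Gronwall) of solutions of globally Lipschitz autonomous systems are proved first.\<close>

lemma gronwall_derivative:
  fixes K K' :: "real \<Rightarrow> real"
  assumes ab: "a \<le> b"
    and der: "\<And>s. s \<in> {a..b} \<Longrightarrow> (K has_real_derivative K' s) (at s within {a..b})"
    and le: "\<And>s. s \<in> {a..b} \<Longrightarrow> K' s \<le> L * K s"
  shows "K b \<le> K a * exp (L * (b - a))"
proof -
  define P where "P s = exp (- L * (s - a)) * K s" for s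
  define P' where "P' s = exp (- L * (s - a)) * (K' s - L * K s)" for s
  have "(P has_real_derivative P' s) (at s within {a..b})" if "s \<in> {a..b}" for s
    unfolding P_def P'_def
    by (rule derivative_eq_intros der[OF that] refl | simp add: algebra_simps)+
  then have "(P' has_integral P b - P a) {a..b}"
    using fundamental_theorem_of_calculus[OF ab] has_real_derivative_iff_has_vector_derivative
    by blast
  moreover have "P' s \<le> 0" if "s \<in> {a..b}" for s
    using le[OF that] unfolding P'_def by (simp add: mult_nonneg_nonpos)
  ultimately have "P b \<le> P a"
    using has_integral_le[of P' _ "{a..b}" "\<lambda>_. 0" 0] by force
  then have "exp (- L * (b - a)) * K b \<le> K a"
    by (simp add: P_def)
  then have "exp (- L * (b - a)) * K b * exp (L * (b - a)) \<le> K a * exp (L * (b - a))"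
    by (rule mult_right_mono) simp
  then show ?thesis
    by (simp add: mult.commute mult.left_commute flip: exp_add)
qed

lemma norm_le_integral_of_derivative_bound:
  fixes v :: "real \<Rightarrow> 'a::euclidean_space"
  assumes s: "s \<in> {a..b}"
    and der: "\<And>s. s \<in> {a..b} \<Longrightarrow> (v has_vector_derivative v' s) (at s within {a..b})"
    and bnd: "\<And>s. s \<in> {a..b} \<Longrightarrow> norm (v' s) \<le> g s"
    and g: "continuous_on {a..b} g"
  shows "norm (v s) \<le> norm (v a) + integral {a..s} g"
proof -
  have sub: "{a..s} \<subseteq> {a..b}"
    using s by auto
  have int: "(v' has_integral v s - v a) {a..s}"
    using s sub der has_vector_derivative_within_subset[of v _ _ "{a..b}" "{a..s}"]
    by (intro fundamental_theorem_of_calculus) auto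
  have "norm (v s - v a) \<le> integral {a..s} g"
    unfolding integral_unique[OF int, symmetric]
    by (rule integral_norm_bound_integral[OF has_integral_integrable[OF int]
          integrable_continuous_interval[OF continuous_on_subset[OF g sub]]])
      (use bnd sub in auto)
  then show ?thesis
    using norm_triangle_sub[of "v s" "v a"] by linarith
qed

text \<open>The norm is not differentiable, so Gronwall is applied to the majorant
  \<open>\<parallel>v a\<parallel> + \<integral>\<^sub>a\<^sup>s (L \<parallel>v\<parallel> + c) + c/L\<close>, whose derivative is at most \<open>L\<close> times itself.\<close>
lemma gronwall_affine:
  fixes v :: "real \<Rightarrow> 'a::euclidean_space"
  assumes ab: "a \<le> b" and L: "L > 0"
    and der: "\<And>s. s \<in> {a..b} \<Longrightarrow> (v has_vector_derivative v' s) (at s within {a..b})"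
    and bnd: "\<And>s. s \<in> {a..b} \<Longrightarrow> norm (v' s) \<le> L * norm (v s) + c"
  shows "norm (v b) + c / L \<le> (norm (v a) + c / L) * exp (L * (b - a))"
proof -
  define g where "g s = L * norm (v s) + c" for s
  have "continuous_on {a..b} v"
    using der has_vector_derivative_continuous continuous_on_eq_continuous_within by blast
  then have g: "continuous_on {a..b} g"
    unfolding g_def by (intro continuous_intros)
  have v_le: "norm (v s) \<le> norm (v a) + integral {a..s} g" if "s \<in> {a..b}" for s
    using norm_le_integral_of_derivative_bound[OF that der _ g] bnd by (simp add: g_def)
  define K where "K s = norm (v a) + integral {a..s} g + c / L" for s
  have "K b \<le> K a * exp (L * (b - a))"
  proof (rule gronwall_derivative[OF ab])
    fix s assume s: "s \<in> {a..b}"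
    show "(K has_real_derivative g s) (at s within {a..b})"
      unfolding K_def by (rule derivative_eq_intros integral_has_real_derivative[OF g s] refl)+ simp
    show "g s \<le> L * K s"
      using mult_left_mono[OF v_le[OF s], of L] L by (simp add: g_def K_def algebra_simps)
  qed
  moreover have "norm (v b) + c / L \<le> K b"
    using v_le[of b] ab by (simp add: K_def)
  ultimately show ?thesis
    by (simp add: K_def)
qed

fun picard_iterate :: "('a::euclidean_space \<Rightarrow> 'a) \<Rightarrow> 'a \<Rightarrow> nat \<Rightarrow> real \<Rightarrow> 'a" where
  "picard_iterate f z 0 t = z"
| "picard_iterate f z (Suc n) t = z + integral {0..t} (\<lambda>s. f (picard_iterate f z n s))"

lemma continuous_on_picard_iterate:
  assumes "continuous_on UNIV f"
  shows "continuous_on {0..D} (picard_iterate f z n)"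
proof (induction n)
  case (Suc n)
  then show ?case
    using continuous_on_compose2[OF assms Suc]
    by (auto intro!: continuous_intros indefinite_integral_continuous_1
        integrable_continuous_interval)
qed simp

lemma has_integral_exp_double:
  fixes L t :: real
  assumes "t \<ge> 0"
  shows "((\<lambda>s. L * exp (2 * L * s)) has_integral (exp (2 * L * t) - 1) / 2) {0..t}"
proof -
  have "((\<lambda>s. L * exp (2 * L * s)) has_integral exp (2 * L * t) / 2 - exp (2 * L * 0) / 2) {0..t}"
    using assms
    by (intro fundamental_theorem_of_calculus)
      (auto intro!: derivative_eq_intros simp flip: has_real_derivative_iff_has_vector_derivative)
  then show ?thesis
    by (simp add: diff_divide_distrib)
qed

text \<open>The weight \<open>exp (2 L t)\<close> makes each Picard step halve the bound, avoiding factorials.\<close>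
lemma norm_picard_iterate_step_le:
  fixes f :: "'a::euclidean_space \<Rightarrow> 'a"
  assumes lip: "L-lipschitz_on UNIV f" and L: "L > 0" and t: "t \<in> {0..D}"
  shows "norm (picard_iterate f z (Suc n) t - picard_iterate f z n t)
    \<le> D * norm (f z) * exp (2 * L * t) / 2 ^ n"
  using t
proof (induction n arbitrary: t)
  case 0
  then have "t * norm (f z) \<le> D * norm (f z) * 1"
    by (simp add: mult_right_mono)
  also have "\<dots> \<le> D * norm (f z) * exp (2 * L * t)"
    using 0 L by (intro mult_left_mono) auto
  finally show ?case
    using 0 by simp
next
  case (Suc n)
  let ?p = "picard_iterate f z" and ?C = "D * norm (f z)"
  have cont: "continuous_on {0..t} (\<lambda>s. f (?p k s))" for k
    using continuous_on_compose2[OF lipschitz_on_continuous_on[OF lip]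
        continuous_on_picard_iterate[OF lipschitz_on_continuous_on[OF lip]]] by auto
  have "norm (?p (Suc (Suc n)) t - ?p (Suc n) t)
      = norm (integral {0..t} (\<lambda>s. f (?p (Suc n) s) - f (?p n s)))"
    using integral_diff[OF integrable_continuous_interval[OF cont[of "Suc n"]]
        integrable_continuous_interval[OF cont[of n]]]
    by (simp only: picard_iterate.simps(2) add_diff_cancel_left)
  also have "\<dots> \<le> integral {0..t} (\<lambda>s. ?C / 2 ^ n * (L * exp (2 * L * s)))"
  proof (rule integral_norm_bound_integral)
    show "(\<lambda>s. f (?p (Suc n) s) - f (?p n s)) integrable_on {0..t}"
      by (intro integrable_diff integrable_continuous_interval cont)
    show "(\<lambda>s. ?C / 2 ^ n * (L * exp (2 * L * s))) integrable_on {0..t}"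
      using has_integral_mult_right[OF has_integral_exp_double[of t L]] Suc.prems
      by (auto intro: has_integral_integrable)
    fix s assume s: "s \<in> {0..t}"
    have "norm (f (?p (Suc n) s) - f (?p n s)) \<le> L * norm (?p (Suc n) s - ?p n s)"
      using lipschitz_on_normD[OF lip] by simp
    also have "\<dots> \<le> L * (?C * exp (2 * L * s) / 2 ^ n)"
      using Suc s L by (intro mult_left_mono) auto
    finally show "norm (f (?p (Suc n) s) - f (?p n s)) \<le> ?C / 2 ^ n * (L * exp (2 * L * s))"
      by (simp add: field_simps)
  qed
  also have "\<dots> = ?C / 2 ^ n * ((exp (2 * L * t) - 1) / 2)"
    using integral_unique[OF has_integral_exp_double[of t L]] Suc.prems
    by (simp only: integral_mult_right atLeastAtMost_iff)
  also have "\<dots> \<le> ?C * exp (2 * L * t) / 2 ^ Suc n"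
    using Suc.prems by (simp add: field_simps)
  finally show ?case .
qed

lemma uniform_limit_picard_iterate:
  fixes f :: "'a::euclidean_space \<Rightarrow> 'a"
  assumes lip: "L-lipschitz_on UNIV f" and L: "L > 0"
  obtains u where "uniform_limit {0..D} (picard_iterate f z) u sequentially"
proof -
  define d where "d n t = picard_iterate f z (Suc n) t - picard_iterate f z n t" for n t
  define B where "B = D * norm (f z) * exp (2 * L * D)"
  have "norm (d n t) \<le> B * (1 / 2) ^ n" if "t \<in> {0..D}" for n t
  proof -
    have "D * norm (f z) * exp (2 * L * t) \<le> B"
      using that L unfolding B_def by (intro mult_left_mono) auto
    then show ?thesis
      using norm_picard_iterate_step_le[OF lip L that, of z n]
      unfolding d_def by (simp add: power_one_over divide_right_mono order_trans)
  qed
  then have "uniform_limit {0..D} (\<lambda>n t. \<Sum>i<n. d i t) (\<lambda>t. \<Sum>i. d i t) sequentially"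
    by (intro Weierstrass_m_test summable_mult summable_geometric) auto
  then have "uniform_limit {0..D} (\<lambda>n t. z + (\<Sum>i<n. d i t)) (\<lambda>t. z + (\<Sum>i. d i t)) sequentially"
    by (intro uniform_limit_intros)
  moreover have "z + (\<Sum>i<n. d i t) = picard_iterate f z n t" for n t
    unfolding d_def by (subst sum_lessThan_telescope) simp
  ultimately show ?thesis
    using that by simp
qed

lemma picard_limit_integral_eq:
  fixes f :: "'a::euclidean_space \<Rightarrow> 'a"
  assumes lip: "L-lipschitz_on UNIV f"
    and lim: "uniform_limit {0..D} (picard_iterate f z) u sequentially" and t: "t \<in> {0..D}"
  shows "u t = z + integral {0..t} (\<lambda>s. f (u s))"
proof -
  have "uniform_limit {0..t} (\<lambda>n s. f (picard_iterate f z n s)) (f \<circ> u) sequentially"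
    using t by (intro uniform_limit_compose[where U = UNIV] lipschitz_on_uniformly_continuous[OF lip]
        uniform_limit_on_subset[OF lim]) auto
  moreover have "continuous_on {0..t} (\<lambda>s. f (picard_iterate f z n s))" for n
    using continuous_on_compose2[OF lipschitz_on_continuous_on[OF lip]
        continuous_on_picard_iterate[OF lipschitz_on_continuous_on[OF lip]]] by auto
  ultimately obtain I J where I: "\<And>n. ((\<lambda>s. f (picard_iterate f z n s)) has_integral I n) {0..t}"
    and J: "((f \<circ> u) has_integral J) {0..t}" and IJ: "I \<longlonglongrightarrow> J"
    by (rule uniform_limit_integral) (simp_all, blast)
  have "picard_iterate f z (Suc n) t = z + I n" for n
    using integral_unique[OF I] by simp
  then have "(\<lambda>n. picard_iterate f z (Suc n) t) \<longlonglongrightarrow> z + J"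
    using tendsto_add[OF tendsto_const IJ] by simp
  moreover have "(\<lambda>n. picard_iterate f z (Suc n) t) \<longlonglongrightarrow> u t"
    using LIMSEQ_Suc[OF tendsto_uniform_limitI[OF lim t]] .
  ultimately show ?thesis
    using LIMSEQ_unique integral_unique[OF J] by (simp add: o_def)
qed

lemma lipschitz_ode_solution_exists:
  fixes f :: "'a::euclidean_space \<Rightarrow> 'a"
  assumes lip: "L-lipschitz_on UNIV f" and L: "L > 0" and D: "D \<ge> 0"
  obtains u where "u 0 = z" "\<And>t. t \<in> {0..D} \<Longrightarrow> (u has_vector_derivative f (u t)) (at t within {0..D})"
proof -
  obtain u where lim: "uniform_limit {0..D} (picard_iterate f z) u sequentially"
    using uniform_limit_picard_iterate[OF lip L] .
  have "continuous_on {0..D} u"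
    using continuous_on_picard_iterate[OF lipschitz_on_continuous_on[OF lip]]
    by (intro uniform_limit_theorem[OF _ lim]) auto
  then have fu: "continuous_on {0..D} (\<lambda>s. f (u s))"
    using continuous_on_compose2[OF lipschitz_on_continuous_on[OF lip]] by auto
  show ?thesis
  proof
    show "u 0 = z"
      using picard_limit_integral_eq[OF lip lim, of 0] D by simp
    fix t assume t: "t \<in> {0..D}"
    have d: "((\<lambda>t. z + integral {0..t} (\<lambda>s. f (u s))) has_vector_derivative f (u t)) (at t within {0..D})"
      using has_vector_derivative_add[OF has_vector_derivative_const integral_has_vector_derivative[OF fu t]]
      by simp
    show "(u has_vector_derivative f (u t)) (at t within {0..D})"
      by (rule has_vector_derivative_transform[OF t _ d]) (simp add: picard_limit_integral_eq[OF lip lim])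
  qed
qed

lemma lipschitz_ode_solutions_dist_le:
  fixes f :: "'a::euclidean_space \<Rightarrow> 'a"
  assumes lip: "L-lipschitz_on UNIV f" and L: "L > 0" and ab: "a \<le> b"
    and u1: "\<And>s. s \<in> {a..b} \<Longrightarrow> (u1 has_vector_derivative f (u1 s)) (at s within {a..b})"
    and u2: "\<And>s. s \<in> {a..b} \<Longrightarrow> (u2 has_vector_derivative f (u2 s)) (at s within {a..b})"
  shows "norm (u1 b - u2 b) \<le> exp (L * (b - a)) * norm (u1 a - u2 a)"
proof -
  have "norm (u1 b - u2 b) + 0 / L \<le> (norm (u1 a - u2 a) + 0 / L) * exp (L * (b - a))"
  proof (rule gronwall_affine[OF ab L])
    fix s assume "s \<in> {a..b}"
    then show "((\<lambda>s. u1 s - u2 s) has_vector_derivative f (u1 s) - f (u2 s)) (at s within {a..b})"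
      by (intro derivative_intros u1 u2)
    show "norm (f (u1 s) - f (u2 s)) \<le> L * norm (u1 s - u2 s) + 0"
      using lipschitz_on_normD[OF lip] by simp
  qed
  then show ?thesis
    by (simp add: mult.commute)
qed

lemma exp_minus_one_le_mult_exp:
  fixes x :: real
  shows "exp x - 1 \<le> x * exp x"
proof -
  have "exp x * (1 - x) \<le> exp x * exp (- x)"
    using exp_ge_add_one_self[of "- x"] by (intro mult_left_mono) auto
  then show ?thesis
    by (simp add: exp_minus algebra_simps)
qed

lemma ode_solutions_perturbation_le:
  fixes f g :: "'a::euclidean_space \<Rightarrow> 'a"
  assumes lip: "L-lipschitz_on UNIV f" and L: "L > 0" and ab: "a \<le> b"
    and fg: "\<And>z. norm (f z - g z) \<le> \<mu>"
    and u: "\<And>s. s \<in> {a..b} \<Longrightarrow> (u has_vector_derivative f (u s)) (at s within {a..b})"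
    and v: "\<And>s. s \<in> {a..b} \<Longrightarrow> (v has_vector_derivative g (v s)) (at s within {a..b})"
    and uv: "u a = v a"
  shows "norm (u b - v b) \<le> \<mu> * (b - a) * exp (L * (b - a))"
proof -
  have "norm (u b - v b) + \<mu> / L \<le> (norm (u a - v a) + \<mu> / L) * exp (L * (b - a))"
  proof (rule gronwall_affine[OF ab L])
    fix s assume "s \<in> {a..b}"
    then show "((\<lambda>s. u s - v s) has_vector_derivative f (u s) - g (v s)) (at s within {a..b})"
      by (intro derivative_intros u v)
    have "norm (f (u s) - g (v s)) \<le> norm (f (u s) - f (v s)) + norm (f (v s) - g (v s))"
      using norm_triangle_ineq[of "f (u s) - f (v s)" "f (v s) - g (v s)"] by simp
    then show "norm (f (u s) - g (v s)) \<le> L * norm (u s - v s) + \<mu>"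
      using lipschitz_on_normD[OF lip, of "u s" "v s"] fg[of "v s"] by simp
  qed
  then have "norm (u b - v b) \<le> \<mu> / L * (exp (L * (b - a)) - 1)"
    using uv by (simp add: algebra_simps)
  also have "\<dots> \<le> \<mu> / L * (L * (b - a) * exp (L * (b - a)))"
  proof (rule mult_left_mono)
    show "exp (L * (b - a)) - 1 \<le> L * (b - a) * exp (L * (b - a))"
      by (rule exp_minus_one_le_mult_exp)
    show "0 \<le> \<mu> / L"
      using L order_trans[OF norm_ge_zero fg] by simp
  qed
  also have "\<dots> = \<mu> * (b - a) * exp (L * (b - a))"
    using L by simp
  finally show ?thesis .
qed

lemma flow_map_eq_solution:
  fixes f :: "'a::euclidean_space \<Rightarrow> 'a"
  assumes lip: "L-lipschitz_on UNIV f" and L: "L > 0" and D: "D \<ge> 0"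
    and u0: "u 0 = z" and u: "\<And>t. t \<in> {0..D} \<Longrightarrow> (u has_vector_derivative f (u t)) (at t within {0..D})"
  shows "flow_map f D z = u D"
  unfolding flow_map_def
proof (rule the_equality)
  show "\<exists>u'. u' 0 = z \<and> u' D = u D \<and> (\<forall>t\<in>{0..D}. (u' has_vector_derivative f (u' t)) (at t within {0..D}))"
    using u0 u by blast
  fix w assume "\<exists>u'. u' 0 = z \<and> u' D = w \<and> (\<forall>t\<in>{0..D}. (u' has_vector_derivative f (u' t)) (at t within {0..D}))"
  then obtain u' where "u' 0 = z" "u' D = w" "\<And>t. t \<in> {0..D} \<Longrightarrow> (u' has_vector_derivative f (u' t)) (at t within {0..D})"
    by blast
  then show "w = u D"
    using lipschitz_ode_solutions_dist_le[OF lip L D, of u' u] u u0 by simp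
qed

lemma norm_flow_map_minus_solution_le:
  fixes f :: "'a::euclidean_space \<Rightarrow> 'a"
  assumes lip: "L-lipschitz_on UNIV f" and L: "L > 0" and D: "D \<ge> 0"
    and w: "\<And>s. s \<in> {a..a + D} \<Longrightarrow> (w has_vector_derivative f (w s)) (at s within {a..a + D})"
  shows "norm (flow_map f D z - w (a + D)) \<le> exp (L * D) * norm (z - w a)"
proof -
  obtain u where u0: "u 0 = z" and u: "\<And>t. t \<in> {0..D} \<Longrightarrow> (u has_vector_derivative f (u t)) (at t within {0..D})"
    using lipschitz_ode_solution_exists[OF lip L D, where z = z] by blast
  have w_shift: "((\<lambda>s. w (a + s)) has_vector_derivative f (w (a + s))) (at s within {0..D})"
    if "s \<in> {0..D}" for s
  proof -
    have img: "(\<lambda>s. a + s) ` {0..D} = {a..a + D}"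
      by simp
    have "(w has_vector_derivative f (w (a + s))) (at (a + s) within {a..a + D})"
      using w that by simp
    then have "(w has_vector_derivative f (w (a + s))) (at (a + s) within (\<lambda>s. a + s) ` {0..D})"
      unfolding img .
    moreover have "((\<lambda>s. a + s) has_vector_derivative 1) (at s within {0..D})"
      by (auto intro!: derivative_eq_intros)
    ultimately show ?thesis
      using vector_diff_chain_within by (force simp: o_def)
  qed
  show ?thesis
    using flow_map_eq_solution[OF lip L D u0 u] lipschitz_ode_solutions_dist_le[OF lip L D u w_shift] u0
    by simp
qed

lemma linear_recurrence_le:
  fixes e :: "nat \<Rightarrow> real"
  assumes q: "q \<ge> 0" and rec: "\<And>i. i < n \<Longrightarrow> e (Suc i) \<le> q * e i + c"
  shows "e n \<le> q ^ n * e 0 + c * (\<Sum>i<n. q ^ i)"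
  using rec
proof (induction n)
  case (Suc n)
  have "e (Suc n) \<le> q * (q ^ n * e 0 + c * (\<Sum>i<n. q ^ i)) + c"
    using Suc mult_left_mono[OF Suc.IH q] by (smt (verit) less_Suc_eq)
  then show ?case
    by (simp add: algebra_simps sum_distrib_left lessThan_Suc_eq_insert_0 sum.reindex)
qed simp

lemma one_step_method_error_le:
  fixes f :: "'a::euclidean_space \<Rightarrow> 'a"
  assumes lip: "L-lipschitz_on UNIV f" and L: "L > 0" and \<Delta>: "\<Delta> > 0"
    and w: "\<And>s. s \<in> {a..a + real n * \<Delta>} \<Longrightarrow>
      (w has_vector_derivative f (w s)) (at s within {a..a + real n * \<Delta>})"
    and step: "\<And>i. i < n \<Longrightarrow> norm (y (Suc i) - flow_map f \<Delta> (y i)) \<le> \<epsilon>"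
  shows "norm (y n - w (a + real n * \<Delta>))
    \<le> exp (L * (real n * \<Delta>)) * norm (y 0 - w a)
      + (1 - exp (L * (real n * \<Delta>))) / (1 - exp (L * \<Delta>)) * \<epsilon>"
proof -
  let ?e = "\<lambda>i. norm (y i - w (a + real i * \<Delta>))"
  have "?e (Suc i) \<le> exp (L * \<Delta>) * ?e i + \<epsilon>" if i: "i < n" for i
  proof -
    let ?s = "a + real i * \<Delta>"
    have "real (Suc i) * \<Delta> \<le> real n * \<Delta>"
      using i \<Delta> by (intro mult_right_mono) auto
    then have sub: "{?s..?s + \<Delta>} \<subseteq> {a..a + real n * \<Delta>}"
      using \<Delta> by (auto simp: algebra_simps)
    have "norm (flow_map f \<Delta> (y i) - w (?s + \<Delta>)) \<le> exp (L * \<Delta>) * ?e i"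
      using \<Delta> has_vector_derivative_within_subset[OF w[OF subsetD[OF sub]] sub]
      by (intro norm_flow_map_minus_solution_le[OF lip L]) auto
    moreover have "norm (y (Suc i) - w (?s + \<Delta>))
        \<le> norm (y (Suc i) - flow_map f \<Delta> (y i)) + norm (flow_map f \<Delta> (y i) - w (?s + \<Delta>))"
      using norm_triangle_ineq[of "y (Suc i) - flow_map f \<Delta> (y i)" "flow_map f \<Delta> (y i) - w (?s + \<Delta>)"]
      by simp
    ultimately show ?thesis
      using step[OF i] by (simp add: algebra_simps)
  qed
  then have "?e n \<le> exp (L * \<Delta>) ^ n * ?e 0 + \<epsilon> * (\<Sum>i<n. exp (L * \<Delta>) ^ i)"
    by (intro linear_recurrence_le) auto
  moreover have "(\<Sum>i<n. exp (L * \<Delta>) ^ i) = (1 - exp (L * \<Delta>) ^ n) / (1 - exp (L * \<Delta>))"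
    using L \<Delta> by (simp add: sum_gp_strict)
  moreover have "exp (L * \<Delta>) ^ n = exp (L * (real n * \<Delta>))"
    by (simp add: mult.left_commute flip: exp_of_nat_mult)
  ultimately show ?thesis
    by (simp add: mult.commute)
qed

lemma switched_solution_eq_mode1_solution:
  fixes f1 f2 :: "'a::euclidean_space \<Rightarrow> 'a"
  assumes lip: "L-lipschitz_on UNIV f1" and L: "L > 0"
    and sol: "switched_solution f1 f2 T1 T2 x0 x"
    and z0: "z 0 = x0" and z: "\<And>s. s \<in> {0..t} \<Longrightarrow> (z has_vector_derivative f1 (z s)) (at s within {0..t})"
    and t: "t \<in> {0..T1}"
  shows "z t = x t"
proof -
  have "(x has_vector_derivative f1 (x s)) (at s within {0..t})" if "s \<in> {0..t}" for s
    using sol t that has_vector_derivative_within_subset[of x _ _ "{0..T1}" "{0..t}"]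
    unfolding switched_solution_def by auto
  then show ?thesis
    using lipschitz_ode_solutions_dist_le[OF lip L _ z, of x] sol z0 t
    unfolding switched_solution_def by auto
qed

lemma switched_solution_dist_mode1_solution:
  fixes f1 f2 :: "'a::euclidean_space \<Rightarrow> 'a"
  assumes lip: "L-lipschitz_on UNIV f1" and L: "L > 0" and f12: "\<And>z. norm (f1 z - f2 z) \<le> \<mu>"
    and sol: "switched_solution f1 f2 T1 T2 x0 x" and T1: "T1 \<ge> 0"
    and z0: "z 0 = x0" and z: "\<And>s. s \<in> {0..t} \<Longrightarrow> (z has_vector_derivative f1 (z s)) (at s within {0..t})"
    and t: "t \<in> {T1..T2}"
  shows "norm (z t - x t) \<le> \<mu> * (t - T1) * exp (L * (t - T1))"
proof (rule ode_solutions_perturbation_le[OF lip L _ f12])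
  fix s assume s: "s \<in> {T1..t}"
  show "(z has_vector_derivative f1 (z s)) (at s within {T1..t})"
    using z[of s] s T1 has_vector_derivative_within_subset[of z _ _ "{0..t}" "{T1..t}"] by auto
  show "(x has_vector_derivative f2 (x s)) (at s within {T1..t})"
    using sol s t has_vector_derivative_within_subset[of x _ _ "{T1..T2}" "{T1..t}"]
    unfolding switched_solution_def by auto
next
  show "z T1 = x T1"
    using z t T1 has_vector_derivative_within_subset[of z _ _ "{0..t}" "{0..T1}"]
    by (intro switched_solution_eq_mode1_solution[OF lip L sol, where z = z]) (auto simp: z0)
qed (use t in auto)

locale switched_grid_scheme =
  fixes f1 f2 :: "'a::euclidean_space \<Rightarrow> 'a"
    and L1 L2 \<mu> \<eta> \<epsilon> T1 T2 tb :: real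
    and J m :: nat
    and x0 :: 'a and x z :: "real \<Rightarrow> 'a"
    and N :: "nat \<Rightarrow> 'a \<Rightarrow> 'a" and y :: "nat \<Rightarrow> 'a"
  assumes L1: "L1 > 0" and L2: "L2 > 0"
    and lip1: "L1-lipschitz_on UNIV f1" and lip2: "L2-lipschitz_on UNIV f2"
    and f12: "\<And>w. norm (f1 w - f2 w) \<le> \<mu>"
    and J: "J \<ge> 2" and T2: "T2 > 0"
    and m: "1 \<le> m" "m \<le> J" "tb = real (m - 1) * (T2 / real (J - 1))"
    and T1: "0 \<le> T1" "T1 \<le> tb" "tb - T1 \<le> \<eta>"
    and sol: "switched_solution f1 f2 T1 T2 x0 x"
    and z0: "z 0 = x0"
    and z: "\<And>s. s \<in> {0..T2} \<Longrightarrow> (z has_vector_derivative f1 (z s)) (at s within {0..T2})"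
    and y1: "y 1 = x0"
    and yrec: "\<forall>j\<in>{2..J}. y j = N j (y (j - 1))"
    and acc: "\<forall>j\<in>{2..J}.
       norm (N j (y (j - 1)) -
             flow_map (if real (j - 1) * (T2 / real (J - 1)) \<le> tb then f1 else f2)
                      (T2 / real (J - 1)) (y (j - 1))) \<le> \<epsilon>"
begin

abbreviation "\<Delta> \<equiv> T2 / real (J - 1)"

text \<open>This is \<open>\<epsilon> (1 + exp (L \<Delta>) + \<dots> + exp (L (k - 1) \<Delta>))\<close>: the one-step errors,
  each magnified by the exact flow over the remaining steps.\<close>
abbreviation "accumulated_error L k \<equiv> (1 - exp (L * (real k * \<Delta>))) / (1 - exp (L * \<Delta>)) * \<epsilon>"

lemma step_size_pos: "\<Delta> > 0"
  using J T2 by simp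

lemma grid_le_T2:
  assumes "Suc k \<le> J"
  shows "real k * \<Delta> \<le> T2"
proof -
  have "real k * \<Delta> \<le> real (J - 1) * \<Delta>"
    using assms step_size_pos by (intro mult_right_mono) auto
  then show ?thesis
    using J by simp
qed

lemma scheme_step_error:
  assumes "1 \<le> k" "Suc k \<le> J"
  shows "norm (y (Suc k) - flow_map (if real k * \<Delta> \<le> tb then f1 else f2) \<Delta> (y k)) \<le> \<epsilon>"
proof -
  have "Suc k \<in> {2..J}"
    using assms by simp
  from bspec[OF yrec this] bspec[OF acc this] show ?thesis
    by simp
qed

lemma reference_has_derivative:
  assumes "0 \<le> a" "b \<le> T2" "s \<in> {a..b}"
  shows "(z has_vector_derivative f1 (z s)) (at s within {a..b})"
  using assms z[of s] has_vector_derivative_within_subset[of z _ _ "{0..T2}" "{a..b}"] by auto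

lemma reference_eq_solution:
  assumes "t \<in> {0..T1}"
  shows "z t = x t"
  using assms T1 m grid_le_T2[of "m - 1"]
  by (intro switched_solution_eq_mode1_solution[OF lip1 L1 sol z0 reference_has_derivative]) auto

lemma reference_dist_solution:
  assumes t: "t \<in> {T1..T2}"
  shows "norm (z t - x t) \<le> \<mu> * (t - T1) * exp (max L1 L2 * (t - T1))"
proof -
  have "norm (z t - x t) \<le> \<mu> * (t - T1) * exp (L1 * (t - T1))"
    using t T1 f12
    by (intro switched_solution_dist_mode1_solution[OF lip1 L1 _ sol _ z0 reference_has_derivative]) auto
  also have "\<dots> \<le> \<mu> * (t - T1) * exp (max L1 L2 * (t - T1))"
    using t order_trans[OF norm_ge_zero f12] by (intro mult_left_mono) (auto intro: mult_right_mono)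
  finally show ?thesis .
qed

lemma scheme_dist_reference:
  assumes "Suc k \<le> J" "real k * \<Delta> \<le> tb"
  shows "norm (y (Suc k) - z (real k * \<Delta>)) \<le> accumulated_error L1 k"
proof -
  have "real (Suc i) * \<Delta> \<le> tb" if "i < k" for i
    using that assms(2) step_size_pos mult_right_mono[of "real (Suc i)" "real k" \<Delta>] by simp
  then have "norm (y (Suc (Suc i)) - flow_map f1 \<Delta> (y (Suc i))) \<le> \<epsilon>" if "i < k" for i
    using scheme_step_error[of "Suc i"] that assms(1) by auto
  then show ?thesis
    using one_step_method_error_le[OF lip1 L1 step_size_pos, of 0 k z "\<lambda>i. y (Suc i)"]
      reference_has_derivative grid_le_T2[OF assms(1)] y1 z0 by simp
qed

lemma scheme_dist_solution_after_detection:
  assumes "m + i \<le> J"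
  shows "norm (y (m + i) - x (tb + real i * \<Delta>))
    \<le> exp (L2 * (real i * \<Delta>)) * norm (y m - x tb) + accumulated_error L2 i"
proof -
  have steps: "norm (y (m + Suc l) - flow_map f2 \<Delta> (y (m + l))) \<le> \<epsilon>" if "l < i" for l
  proof -
    have "tb < real (m + l) * \<Delta>"
      unfolding m(3) using m(1) step_size_pos by (intro mult_strict_right_mono) auto
    then show ?thesis
      using scheme_step_error[of "m + l"] that assms m(1) by simp
  qed
  have "tb + real i * \<Delta> = real (m - 1 + i) * \<Delta>"
    using m(3) by (simp add: distrib_right add_divide_distrib)
  then have "{tb..tb + real i * \<Delta>} \<subseteq> {T1..T2}"
    using T1 grid_le_T2[of "m - 1 + i"] assms m(1) by auto
  then have "(x has_vector_derivative f2 (x s)) (at s within {tb..tb + real i * \<Delta>})"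
    if "s \<in> {tb..tb + real i * \<Delta>}" for s
    using that sol has_vector_derivative_within_subset[of x _ _ "{T1..T2}" "{tb..tb + real i * \<Delta>}"]
    unfolding switched_solution_def by auto
  then show ?thesis
    using one_step_method_error_le[OF lip2 L2 step_size_pos, of tb i x "\<lambda>l. y (m + l)"] steps by simp
qed

lemma error_before_switch:
  assumes "j \<in> {2..J}" "real (j - 1) * \<Delta> \<in> {0<..T1}"
  shows "norm (y j - x (real (j - 1) * \<Delta>)) \<le> accumulated_error L1 (j - 1)"
  using assms scheme_dist_reference[of "j - 1"] reference_eq_solution[of "real (j - 1) * \<Delta>"] T1
  by auto

lemma error_until_detection:
  assumes "j \<in> {2..J}" "real (j - 1) * \<Delta> \<in> {T1<..tb}"
  shows "norm (y j - x (real (j - 1) * \<Delta>))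
    \<le> \<mu> * (real (j - 1) * \<Delta> - T1) * exp (max L1 L2 * (real (j - 1) * \<Delta> - T1))
      + accumulated_error L1 (j - 1)"
  using assms scheme_dist_reference[of "j - 1"] reference_dist_solution[of "real (j - 1) * \<Delta>"]
    grid_le_T2[of "j - 1"] norm_triangle_ineq[of "y j - z (real (j - 1) * \<Delta>)" "z (real (j - 1) * \<Delta>) - x (real (j - 1) * \<Delta>)"]
  by auto

lemma error_at_detection:
  "norm (y m - x tb) \<le> \<mu> * \<eta> * exp (max L1 L2 * \<eta>) + accumulated_error L1 (m - 1)"
proof -
  have "\<mu> * (tb - T1) * exp (max L1 L2 * (tb - T1)) \<le> \<mu> * \<eta> * exp (max L1 L2 * \<eta>)"
    using T1 L1 order_trans[OF norm_ge_zero f12] mult_left_mono[of "tb - T1" \<eta> "max L1 L2"]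
    by (intro mult_mono) auto
  then show ?thesis
    using scheme_dist_reference[of "m - 1"] reference_dist_solution[of tb] m T1 grid_le_T2[of "m - 1"]
      norm_triangle_ineq[of "y m - z tb" "z tb - x tb"] by auto
qed

lemma error_after_detection:
  assumes "j \<in> {2..J}" "real (j - 1) * \<Delta> \<in> {tb<..T2}"
  shows "norm (y j - x (real (j - 1) * \<Delta>))
    \<le> \<mu> * \<eta> * exp (L2 * (real (j - 1) * \<Delta> - tb) + max L1 L2 * \<eta>)
      + (1 - exp (L2 * (real (j - 1) * \<Delta> - tb))) / (1 - exp (L2 * \<Delta>)) * \<epsilon>
      + exp (L2 * (real (j - 1) * \<Delta> - tb)) * ((1 - exp (L1 * tb)) / (1 - exp (L1 * \<Delta>))) * \<epsilon>"
proof -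
  define i where "i = j - m"
  have "real (m - 1) * \<Delta> < real (j - 1) * \<Delta>"
    using assms(2) m(3) by simp
  then have "m - 1 < j - 1"
    using mult_right_less_imp_less step_size_pos of_nat_less_iff by (metis less_le)
  then have j: "j = m + i" and i: "m + i \<le> J"
    using assms m(1) by (auto simp: i_def)
  then have "j - 1 = (m - 1) + i"
    using m(1) by simp
  then have ti: "real (j - 1) * \<Delta> - tb = real i * \<Delta>"
    unfolding m(3) by (simp only: of_nat_add distrib_right) simp
  have "norm (y j - x (real (j - 1) * \<Delta>))
      \<le> exp (L2 * (real i * \<Delta>)) * norm (y m - x tb) + accumulated_error L2 i"
    using scheme_dist_solution_after_detection[OF i] ti j by (simp add: algebra_simps)
  also have "\<dots> \<le> exp (L2 * (real i * \<Delta>)) * (\<mu> * \<eta> * exp (max L1 L2 * \<eta>) + accumulated_error L1 (m - 1))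
      + accumulated_error L2 i"
    using error_at_detection by simp
  finally show ?thesis
    unfolding ti m(3)[symmetric] by (simp add: algebra_simps exp_add)
qed

end

theorem mainTheorem5:
  fixes f1 f2 :: "'a::euclidean_space \<Rightarrow> 'a"
    and L1 L2 \<mu> \<eta> \<epsilon> T1 T2 tb :: real
    and J m :: nat
    and x0 :: 'a and x :: "real \<Rightarrow> 'a"
    and N :: "nat \<Rightarrow> 'a \<Rightarrow> 'a" and y :: "nat \<Rightarrow> 'a"
  assumes L1: "L1 > 0" and L2: "L2 > 0"
    and lip1: "L1-lipschitz_on UNIV f1" and lip2: "L2-lipschitz_on UNIV f2"
    and mu: "\<mu> > 0" and diff: "\<forall>z. norm (f1 z - f2 z) \<le> \<mu>"
    and J: "J \<ge> 2" and T2: "T2 > 0"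
    and eta: "\<eta> > 0"
    and m: "1 \<le> m" "m \<le> J" "tb = real (m - 1) * (T2 / real (J - 1))"
    and T1: "0 < T1" "T1 \<le> tb" "tb < T2" "\<bar>tb - T1\<bar> \<le> \<eta>"
    and sol: "switched_solution f1 f2 T1 T2 x0 x"
    and eps: "\<epsilon> \<ge> 0"
    and y1: "y 1 = x0"
    and yrec: "\<forall>j\<in>{2..J}. y j = N j (y (j - 1))"
    and acc: "\<forall>j\<in>{2..J}.
       norm (N j (y (j - 1)) -
             flow_map (if real (j - 1) * (T2 / real (J - 1)) \<le> tb then f1 else f2)
                      (T2 / real (J - 1)) (y (j - 1))) \<le> \<epsilon>"
  shows "\<forall>j\<in>{2..J}.
    (let \<Delta> = T2 / real (J - 1); t = real (j - 1) * \<Delta> in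
      (t \<in> {0<..T1} \<longrightarrow>
         norm (y j - x t) \<le> (1 - exp (L1 * t)) / (1 - exp (L1 * \<Delta>)) * \<epsilon>) \<and>
      (t \<in> {T1<..tb} \<longrightarrow>
         norm (y j - x t) \<le> \<mu> * (t - T1) * exp (max L1 L2 * (t - T1))
           + (1 - exp (L1 * t)) / (1 - exp (L1 * \<Delta>)) * \<epsilon>) \<and>
      (t \<in> {tb<..T2} \<longrightarrow>
         norm (y j - x t) \<le> \<mu> * \<eta> * exp (L2 * (t - tb) + max L1 L2 * \<eta>)
           + (1 - exp (L2 * (t - tb))) / (1 - exp (L2 * \<Delta>)) * \<epsilon>
           + exp (L2 * (t - tb)) * ((1 - exp (L1 * tb)) / (1 - exp (L1 * \<Delta>))) * \<epsilon>))"
proof -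
  obtain z where z0: "z 0 = x0"
    and z: "\<And>s. s \<in> {0..T2} \<Longrightarrow> (z has_vector_derivative f1 (z s)) (at s within {0..T2})"
    using lipschitz_ode_solution_exists[OF lip1 L1, of T2 x0] T2 by auto
  interpret switched_grid_scheme f1 f2 L1 L2 \<mu> \<eta> \<epsilon> T1 T2 tb J m x0 x z N y
    using assms z0 z by unfold_locales auto
  show ?thesis
    using error_before_switch error_until_detection error_after_detection
    unfolding Let_def by blast
qed

end
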